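(* Let $A\subset\mathbb{R}^d$ have positive reach and let $B\subset\mathbb{R}^d$ satisfy $A\subset B\subset\mathrm{UP}(A)$. If $B$ is star-shaped relative to $A$, i.e. for every $p\in B$ the line segment from $p$ to $\xi_A(p)$ is contained in $B$, then $B$ deformation retracts onto $A$.
   Context: For closed $A\subset\mathbb{R}^d$: $\mathrm{UP}(A)$ is the set of points of $\mathbb{R}^d$ with a unique nearest point in $A$, $\xi_A:\mathrm{UP}(A)\to A$ maps a point to that nearest point, $\mathrm{Med}(A)=\mathbb{R}^d\setminus\mathrm{UP}(A)$, and the reach is $\tau_A=\inf_{p\in A}d(p,\mathrm{Med}(A))$; positive reach means $\tau_A>0$. *)

theory Defs
  imports "HOL-Analysis.Analysis"
begin

definition nearest_pt :: "'a::euclidean_space set \<Rightarrow> 'a \<Rightarrow> 'a \<Rightarrow> bool" where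
  "nearest_pt A x p \<longleftrightarrow> p \<in> A \<and> (\<forall>q\<in>A. dist x p \<le> dist x q)"

definition UP :: "'a::euclidean_space set \<Rightarrow> 'a set" where
  "UP A = {x. \<exists>!p. nearest_pt A x p}"

text \<open>xi_A: the projection onto A (meaningful on UP(A))\<close>
definition xi :: "'a::euclidean_space set \<Rightarrow> 'a \<Rightarrow> 'a" where
  "xi A x = (THE p. nearest_pt A x p)"

definition Med :: "'a::euclidean_space set \<Rightarrow> 'a set" where
  "Med A = UNIV - UP A"

text \<open>Reach, as an extended real (infimum over empty sets is +infinity)\<close>
definition reach :: "'a::euclidean_space set \<Rightarrow> ereal" where
  "reach A = (INF p\<in>A. INF m\<in>Med A. ereal (dist p m))"

definition deformation_retracts_onto :: "'a::topological_space set \<Rightarrow> 'a set \<Rightarrow> bool" where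
  "deformation_retracts_onto B A \<longleftrightarrow> A \<subseteq> B \<and>
     (\<exists>H :: real \<times> 'a \<Rightarrow> 'a.
        continuous_on ({0..1} \<times> B) H \<and> H ` ({0..1} \<times> B) \<subseteq> B \<and>
        (\<forall>x\<in>B. H (0, x) = x) \<and> (\<forall>x\<in>B. H (1, x) \<in> A) \<and>
        (\<forall>t\<in>{0..1}. \<forall>a\<in>A. H (t, a) = a))"

end

theory Submission
  imports Defs
begin

text \<open>
  The deformation is the straight-line homotopy \<open>H(t, x) = (1 - t) x + t \<xi>\<^sub>A(x)\<close>: it stays
  in \<open>B\<close> by star-shapedness and fixes \<open>A\<close> pointwise. It is continuous because \<open>\<xi>\<^sub>A\<close> is
  continuous on all of \<open>UP(A)\<close> for every closed \<open>A\<close>: nearest points of a convergent sequence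
  stay bounded, limits of nearest points are nearest points, and uniqueness of the nearest point
  then forces convergence.
\<close>

lemma nearest_pt_xi:
  assumes "x \<in> UP A"
  shows "nearest_pt A x (xi A x)"
  using assms unfolding UP_def xi_def by (auto intro: theI')

lemma xi_eqI:
  assumes "x \<in> UP A" and "nearest_pt A x p"
  shows "xi A x = p"
  using assms nearest_pt_xi unfolding UP_def by blast

lemma xi_in:
  assumes "x \<in> UP A"
  shows "xi A x \<in> A"
  using nearest_pt_xi[OF assms] by (simp add: nearest_pt_def)

lemma nearest_pt_self_iff:
  assumes "a \<in> A"
  shows "nearest_pt A a p \<longleftrightarrow> p = a"
  using assms by (auto simp: nearest_pt_def)

lemma subset_UP: "A \<subseteq> UP A"
  by (auto simp: UP_def nearest_pt_self_iff)

lemma xi_self: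
  assumes "a \<in> A"
  shows "xi A a = a"
  using xi_eqI[of a A a] assms subset_UP by (auto simp: nearest_pt_self_iff)

lemma norm_nearest_pt_le:
  assumes "nearest_pt A x p" and "q \<in> A"
  shows "norm p \<le> 2 * norm x + norm q"
proof -
  have "dist x p \<le> dist x q"
    using assms by (simp add: nearest_pt_def)
  also have "\<dots> \<le> norm x + norm q"
    by (simp add: dist_norm norm_triangle_ineq4)
  finally show ?thesis
    using norm_triangle_ineq3[of p x] by (simp add: dist_norm norm_minus_commute)
qed

lemma bounded_xi_image:
  assumes "bounded S" and "S \<subseteq> UP A"
  shows "bounded (xi A ` S)"
proof (cases "S = {}")
  case False
  then obtain x0 where "x0 \<in> S" by blast
  then have q: "xi A x0 \<in> A"
    using assms(2) xi_in by blast
  obtain M where M: "\<And>x. x \<in> S \<Longrightarrow> norm x \<le> M"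
    using assms(1) by (auto simp: bounded_iff)
  have "norm (xi A x) \<le> 2 * M + norm (xi A x0)" if "x \<in> S" for x
    using norm_nearest_pt_le[OF nearest_pt_xi q] M[OF that] assms(2) that by force
  then show ?thesis
    by (auto simp: bounded_iff)
qed simp

lemma nearest_pt_limit:
  assumes "closed A" and near: "\<And>n. nearest_pt A (x n) (p n)"
    and x: "x \<longlonglongrightarrow> x0" and p: "p \<longlonglongrightarrow> p0"
  shows "nearest_pt A x0 p0"
  unfolding nearest_pt_def
proof (intro conjI ballI)
  show "p0 \<in> A"
    using closed_sequentially[OF \<open>closed A\<close>, of p p0] near p by (simp add: nearest_pt_def)
  fix q assume "q \<in> A"
  then have "\<And>n. dist (x n) (p n) \<le> dist (x n) q"
    using near by (simp add: nearest_pt_def)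
  then show "dist x0 p0 \<le> dist x0 q"
    by (intro tendsto_le[OF trivial_limit_sequentially tendsto_dist[OF x tendsto_const]
          tendsto_dist[OF x p]]) auto
qed

lemma continuous_on_xi:
  fixes A :: "'a::euclidean_space set"
  assumes "closed A"
  shows "continuous_on (UP A) (xi A)"
  unfolding continuous_on_sequentially
proof (intro allI ballI impI, elim conjE)
  fix s and a :: 'a
  assume a: "a \<in> UP A" and s: "\<forall>n. s n \<in> UP A" and lim: "s \<longlonglongrightarrow> a"
  show "(xi A \<circ> s) \<longlonglongrightarrow> xi A a"
  proof (rule ccontr)
    assume "\<not> (xi A \<circ> s) \<longlonglongrightarrow> xi A a"
    then obtain e where "e > 0"
      and "\<not> eventually (\<lambda>n. dist (xi A (s n)) (xi A a) < e) sequentially"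
      unfolding tendsto_iff by auto
    then obtain r :: "nat \<Rightarrow> nat"
      where r: "strict_mono r" and far: "\<And>n. e \<le> dist (xi A (s (r n))) (xi A a)"
      using not_eventually_sequentiallyD by (metis not_less)
    have "bounded (xi A ` range s)"
      using bounded_xi_image convergent_imp_bounded[OF lim] s by blast
    then have "bounded (range (\<lambda>n. xi A (s (r n))))"
      by (rule bounded_subset) auto
    then obtain l and r' :: "nat \<Rightarrow> nat"
      where r': "strict_mono r'" and "((\<lambda>n. xi A (s (r n))) \<circ> r') \<longlonglongrightarrow> l"
      using bounded_imp_convergent_subsequence by blast
    then have l: "(\<lambda>n. xi A (s (r (r' n)))) \<longlonglongrightarrow> l"
      by (simp add: o_def)
    have "(\<lambda>n. s (r (r' n))) \<longlonglongrightarrow> a"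
      using LIMSEQ_subseq_LIMSEQ[OF LIMSEQ_subseq_LIMSEQ[OF lim r] r'] by (simp add: o_def)
    then have "nearest_pt A a l"
      using nearest_pt_limit[OF assms nearest_pt_xi _ l] s by blast
    then have "l = xi A a"
      using xi_eqI[OF a] by simp
    moreover have "e \<le> dist l (xi A a)"
      by (rule tendsto_le[OF trivial_limit_sequentially tendsto_dist[OF l tendsto_const]
            tendsto_const]) (simp add: far)
    ultimately show False
      using \<open>e > 0\<close> by simp
  qed
qed

lemma deformation_retracts_onto_straight_line:
  fixes B :: "'a::real_normed_vector set"
  assumes "A \<subseteq> B" and "continuous_on B r" and "r ` B \<subseteq> A" and "\<And>a. a \<in> A \<Longrightarrow> r a = a"
    and segment: "\<And>x. x \<in> B \<Longrightarrow> closed_segment x (r x) \<subseteq> B"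
  shows "deformation_retracts_onto B A"
proof -
  define H where "H = (\<lambda>(t::real, x). (1 - t) *\<^sub>R x + t *\<^sub>R r x)"
  have "continuous_on ({0..1} \<times> B) H"
    unfolding H_def case_prod_beta
    by (intro continuous_intros continuous_on_compose2[OF assms(2)]) auto
  moreover have "H (t, x) \<in> B" if "t \<in> {0..1}" and "x \<in> B" for t x
  proof -
    have "H (t, x) \<in> closed_segment x (r x)"
      using that(1) by (auto simp: H_def closed_segment_def)
    then show ?thesis
      using segment[OF that(2)] by blast
  qed
  moreover have "H (t, a) = a" if "a \<in> A" for t a
    using assms(4)[OF that] by (simp add: H_def algebra_simps flip: scaleR_add_left)
  ultimately show ?thesis
    using assms(1,3) unfolding deformation_retracts_onto_def
    by (intro conjI exI[of _ H]) (auto simp: H_def)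
qed

theorem mainTheorem13:
  fixes A B :: "'a::euclidean_space set"
  assumes "closed A"
    and "reach A > 0"
    and "A \<subseteq> B" and "B \<subseteq> UP A"
    and "\<forall>p\<in>B. closed_segment p (xi A p) \<subseteq> B"
  shows "deformation_retracts_onto B A"
proof (rule deformation_retracts_onto_straight_line)
  show "continuous_on B (xi A)"
    using continuous_on_xi[OF \<open>closed A\<close>] \<open>B \<subseteq> UP A\<close> by (rule continuous_on_subset)
  show "xi A ` B \<subseteq> A"
    using \<open>B \<subseteq> UP A\<close> xi_in by blast
qed (use assms xi_self in auto)

end
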